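(* Let $n\ge3$ be an integer and $\mathbb F$ a finite field, and let $\mathcal G_n$ be the Ferrers diagram with column heights $(n,n-1,\dots,n-1,1)$ ($n-2$ columns of height $n-1$). Let $\mathcal C_0$ be an $[(n-1)\times(n-1),(n-1)(n-3),3]_{\mathbb F}$ MRD code, viewed inside $\mathbb F^{\mathcal G_n}$ by placing each matrix in the top-left $(n-1)\times(n-1)$ block of an $n\times n$ matrix (padding with zeros). Let $\mathcal C_0'\subseteq\mathbb F^{(n-2)\times(n-2)}$ be the set of matrices obtained from elements of $\mathcal C_0$ (as $(n-1)\times(n-1)$ matrices) by deleting the first row and first column, and let $A'\in\mathbb F^{(n-2)\times(n-2)}\setminus\mathcal C_0'$. Define $A\in\mathbb F^{n\times n}$ by $A_{i,j}=1$ if $(i,j)\in\{(1,n),(n,1)\}$, $A_{i,j}=A'_{i-1,j-1}$ if $2\le i,j\le n-1$, and $A_{i,j}=0$ otherwise. Then $\mathcal C_0\oplus\langle A\rangle_{\mathbb F}$ is a $[\mathcal G_n,\nu_{\min}(\mathcal G_n,3),3]_{\mathbb F}$ MFD code, where $\nu_{\min}(\mathcal G_n,3)=(n-2)^2$.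
   Context: A Ferrers diagram $\mathcal D\subseteq\{1,2,\dots\}^2$ (first coordinate = row) is given by column heights $c_i$; $\nu_j(\mathcal D,d)=\sum_{i\ge j+1}\max\{0,c_i-d+j\}$ for $0\le j\le d-1$ and $\nu_{\min}(\mathcal D,d)=\min_j\nu_j(\mathcal D,d)$. For $\mathcal D\subseteq[n]^2$, $\mathbb F^{\mathcal D}$ is the space of $n\times n$ matrices over $\mathbb F$ with zero entries outside $\mathcal D$. A $[\mathcal D,k,d]_{\mathbb F}$ code is a $k$-dimensional subspace of $\mathbb F^{\mathcal D}$ whose nonzero elements have minimum rank $d$; it is MFD if $k=\nu_{\min}(\mathcal D,d)$. An $[m\times n,k,d]_{\mathbb F}$ code is a $k$-dimensional subspace of $\mathbb F^{m\times n}$ with minimum rank $d$ among nonzero elements; it is MRD if $k=\max(m,n)(\min(m,n)-d+1)$. *)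

theory Defs
  imports Main HOL.Vector_Spaces "HOL-Library.Function_Algebras"
begin

text \<open>Matrices over a field are functions nat => nat => 'a, indexed from 1
 (row index first). The space of m x n matrices is the set of such functions vanishing outside
 rows 1..m, columns 1..n; thus padding an (n-1)x(n-1) matrix with zeros to an n x n matrix
 is literally the identity in this representation.\<close>

definition vscale :: "'a::field \<Rightarrow> (nat \<Rightarrow> 'a) \<Rightarrow> (nat \<Rightarrow> 'a)" where
  "vscale c v = (\<lambda>i. c * v i)"

definition mscale :: "'a::field \<Rightarrow> (nat \<Rightarrow> nat \<Rightarrow> 'a) \<Rightarrow> (nat \<Rightarrow> nat \<Rightarrow> 'a)" where
  "mscale c M = (\<lambda>i j. c * M i j)"

lemma vector_space_vscale: "vector_space (vscale :: 'a::field \<Rightarrow> _)"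
  by unfold_locales (auto simp: vscale_def algebra_simps plus_fun_def)

lemma vector_space_mscale: "vector_space (mscale :: 'a::field \<Rightarrow> _)"
  by unfold_locales (auto simp: mscale_def algebra_simps plus_fun_def)

definition mrank :: "(nat \<Rightarrow> nat \<Rightarrow> 'a::field) \<Rightarrow> nat" where
  "mrank M = vector_space.dim vscale (range (\<lambda>j i. M i j))"

definition mat_subspace :: "(nat \<Rightarrow> nat \<Rightarrow> 'a::field) set \<Rightarrow> bool" where
  "mat_subspace S = module.subspace mscale S"

definition mat_dim :: "(nat \<Rightarrow> nat \<Rightarrow> 'a::field) set \<Rightarrow> nat" where
  "mat_dim S = vector_space.dim mscale S"

definition mat_space :: "nat \<Rightarrow> nat \<Rightarrow> (nat \<Rightarrow> nat \<Rightarrow> 'a::zero) set" where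
  "mat_space m n = {M. \<forall>i j. M i j \<noteq> 0 \<longrightarrow> 1 \<le> i \<and> i \<le> m \<and> 1 \<le> j \<and> j \<le> n}"

definition ferrers_space :: "(nat \<times> nat) set \<Rightarrow> (nat \<Rightarrow> nat \<Rightarrow> 'a::zero) set" where
  "ferrers_space D = {M. \<forall>i j. M i j \<noteq> 0 \<longrightarrow> (i, j) \<in> D}"

definition min_rank_is :: "(nat \<Rightarrow> nat \<Rightarrow> 'a::field) set \<Rightarrow> nat \<Rightarrow> bool" where
  "min_rank_is S d = ((S \<noteq> {0} \<longrightarrow> (\<exists>M\<in>S. M \<noteq> 0 \<and> mrank M = d)) \<and> (\<forall>M\<in>S. M \<noteq> 0 \<longrightarrow> d \<le> mrank M))"

definition rank_code :: "nat \<Rightarrow> nat \<Rightarrow> (nat \<Rightarrow> nat \<Rightarrow> 'a::field) set \<Rightarrow> nat \<Rightarrow> nat \<Rightarrow> bool" where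
  "rank_code m n C k d = (C \<subseteq> mat_space m n \<and> mat_subspace C \<and> mat_dim C = k \<and> min_rank_is C d)"

definition MRD_code :: "nat \<Rightarrow> nat \<Rightarrow> (nat \<Rightarrow> nat \<Rightarrow> 'a::field) set \<Rightarrow> nat \<Rightarrow> nat \<Rightarrow> bool" where
  "MRD_code m n C k d = (rank_code m n C k d \<and> k = max m n * (min m n + 1 - d))"

text \<open>Ferrers diagram with column heights cs (column i has height cs!(i-1)); cells are
 (row, column), top-left justified.\<close>
definition ferrers :: "nat list \<Rightarrow> (nat \<times> nat) set" where
  "ferrers cs = {(r, i). 1 \<le> i \<and> i \<le> length cs \<and> 1 \<le> r \<and> r \<le> cs ! (i - 1)}"

text \<open>nu_j(D,d) = sum_{i >= j+1} max(0, c_i - d + 1 + j) (natural subtraction truncates at 0).\<close>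
definition nu :: "nat list \<Rightarrow> nat \<Rightarrow> nat \<Rightarrow> nat" where
  "nu cs d j = (\<Sum>i\<in>{j+1..length cs}. cs ! (i - 1) + j + 1 - d)"

definition nu_min :: "nat list \<Rightarrow> nat \<Rightarrow> nat" where
  "nu_min cs d = Min (nu cs d ` {0..<d})"

definition ferrers_code :: "(nat \<times> nat) set \<Rightarrow> (nat \<Rightarrow> nat \<Rightarrow> 'a::field) set \<Rightarrow> nat \<Rightarrow> nat \<Rightarrow> bool" where
  "ferrers_code D C k d = (C \<subseteq> ferrers_space D \<and> mat_subspace C \<and> mat_dim C = k \<and> min_rank_is C d)"

definition MFD_code :: "nat list \<Rightarrow> (nat \<Rightarrow> nat \<Rightarrow> 'a::field) set \<Rightarrow> nat \<Rightarrow> nat \<Rightarrow> bool" where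
  "MFD_code cs C k d = (ferrers_code (ferrers cs) C k d \<and> k = nu_min cs d)"

definition G_heights :: "nat \<Rightarrow> nat list" where
  "G_heights n = [n] @ replicate (n - 2) (n - 1) @ [1]"

definition del_first :: "(nat \<Rightarrow> nat \<Rightarrow> 'a::zero) \<Rightarrow> (nat \<Rightarrow> nat \<Rightarrow> 'a)" where
  "del_first M = (\<lambda>i j. if 1 \<le> i \<and> 1 \<le> j then M (i + 1) (j + 1) else 0)"

definition build_A :: "nat \<Rightarrow> (nat \<Rightarrow> nat \<Rightarrow> 'a::{zero,one}) \<Rightarrow> (nat \<Rightarrow> nat \<Rightarrow> 'a)" where
  "build_A n A' = (\<lambda>i j. if (i, j) \<in> {(1, n), (n, 1)} then 1
      else if 2 \<le> i \<and> i \<le> n - 1 \<and> 2 \<le> j \<and> j \<le> n - 1 then A' (i - 1) (j - 1) else 0)"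

end

(*
  Every element of C0 + <A> is M + c A with M in C0. For c = 0 its rank is at least 3 because
  C0 is an MRD code of minimum distance 3. For c <> 0 the last column and the last row of
  M + c A are c e_1 and c e_1^T, while the inner block (rows and columns 2 .. n-1) equals
  del_first M + c A', which is nonzero because A' is not in del_first ` C0. A nonzero entry (i, j)
  of that block gives, in rows 1, i, n and columns n, j, 1, a triangular 3 x 3 minor with
  nonzero diagonal, hence rank at least 3. The entry of A at (1, n) lies outside the
  (n-1) x (n-1) box containing C0, so the dimension grows by one:
  (n-1)(n-3) + 1 = (n-2)^2, which is also the common value of nu_0, nu_1, nu_2 for G_n.
*)
theory Submission
  imports Defs
begin

context vector_space
begin

lemma span_insert_subspace:
  assumes "subspace S"
  shows "span (insert a S) = {x + c *s a | x c. x \<in> S}"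
proof -
  have "x - k *s a \<in> S \<longleftrightarrow> (\<exists>y. x = y + k *s a \<and> y \<in> S)" for x k
    by (metis add_diff_cancel diff_add_cancel)
  moreover have "span S = S" using assms by simp
  ultimately show ?thesis
    unfolding span_insert by blast
qed

lemma dim_insert_notin_span:
  assumes "a \<notin> span S" and "S \<subseteq> span W" and "finite W"
  shows "dim (insert a S) = Suc (dim S)"
proof -
  obtain B where B: "B \<subseteq> S" "independent B" "S \<subseteq> span B" "card B = dim S"
    by (rule basis_exists)
  have "finite B"
    using independent_span_bound[OF assms(3) B(2)] B(1) assms(2) span_superset by blast
  have "a \<notin> span B"
    using assms(1) B(1) span_mono by blast
  then have indep: "independent (insert a B)" and "a \<notin> B"
    using B(2) independent_insertI span_superset by blast+
  have "span B = span S"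
    unfolding span_eq using B(1,3) span_superset by blast
  then have "span (insert a B) = span (insert a S)"
    by (simp add: span_insert)
  then have "dim (insert a S) = dim (insert a B)"
    by (intro span_eq_dim) simp
  also have "\<dots> = card (insert a B)"
    using indep by (rule dim_eq_card_independent)
  finally show ?thesis
    using \<open>finite B\<close> \<open>a \<notin> B\<close> B(4) by simp
qed

lemma independent_card_le_dim_finite:
  assumes "finite V" and "B \<subseteq> V" and "independent B"
  shows "card B \<le> dim V"
proof -
  obtain C where C: "C \<subseteq> V" "V \<subseteq> span C" "card C = dim V"
    by (rule basis_exists)
  have "finite C"
    using C(1) assms(1) by (rule finite_subset)
  moreover have "B \<subseteq> span C"
    using assms(2) C(2) by blast
  ultimately show ?thesis
    using independent_span_bound assms(3) C(3) by metis
qed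

end

interpretation vs: vector_space "vscale :: 'a::field \<Rightarrow> (nat \<Rightarrow> 'a) \<Rightarrow> _"
  by (rule vector_space_vscale)
interpretation ms: vector_space "mscale :: 'a::field \<Rightarrow> (nat \<Rightarrow> nat \<Rightarrow> 'a) \<Rightarrow> _"
  by (rule vector_space_mscale)

lemma mat_space_eq_ferrers_space: "mat_space m k = ferrers_space ({1..m} \<times> {1..k})"
  by (auto simp: mat_space_def ferrers_space_def)

lemma ferrers_space_mono: "D \<subseteq> E \<Longrightarrow> ferrers_space D \<subseteq> ferrers_space E"
  by (auto simp: ferrers_space_def)

lemma subspace_ferrers_space: "ms.subspace (ferrers_space D)"
  by (auto simp: ms.subspace_def ferrers_space_def mscale_def) (metis add.left_neutral)

lemma subspace_mat_space: "ms.subspace (mat_space m k)"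
  by (simp add: mat_space_eq_ferrers_space subspace_ferrers_space)

lemma finite_ferrers_space:
  assumes "finite D"
  shows "finite (ferrers_space D :: (nat \<Rightarrow> nat \<Rightarrow> 'a::{finite,zero}) set)"
proof -
  have "ferrers_space D \<subseteq>
      curry ` {f. \<forall>x. (x \<in> D \<longrightarrow> f x \<in> (UNIV :: 'a set)) \<and> (x \<notin> D \<longrightarrow> f x = 0)}"
  proof
    fix M :: "nat \<Rightarrow> nat \<Rightarrow> 'a"
    assume "M \<in> ferrers_space D"
    then show "M \<in> curry ` {f. \<forall>x. (x \<in> D \<longrightarrow> f x \<in> UNIV) \<and> (x \<notin> D \<longrightarrow> f x = 0)}"
      by (intro image_eqI[of _ _ "case_prod M"]) (auto simp: ferrers_space_def)
  qed
  then show ?thesis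
    using finite_set_of_finite_funs[OF assms finite_UNIV, of 0] by (rule finite_surj[rotated])
qed

lemma span_vanishing_at:
  assumes "\<And>v. v \<in> B \<Longrightarrow> v i = 0" and "x \<in> vs.span B"
  shows "x i = 0"
proof -
  have "vs.subspace {v :: nat \<Rightarrow> 'a::field. v i = 0}"
    by (auto simp: vs.subspace_def vscale_def)
  then have "vs.span B \<subseteq> {v. v i = 0}"
    using assms(1) by (intro vs.span_minimal) auto
  then show ?thesis using assms(2) by blast
qed

lemma columns_subset:
  assumes "M \<in> mat_space m k"
  shows "range (\<lambda>j i. M i j) \<subseteq> insert 0 ((\<lambda>j i. M i j) ` {1..k})"
  using assms by (force simp: mat_space_def fun_eq_iff)

lemma mrank_le_ncols:
  fixes M :: "nat \<Rightarrow> nat \<Rightarrow> 'a::field"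
  assumes "M \<in> mat_space m k"
  shows "mrank M \<le> k"
proof -
  let ?cols = "(\<lambda>j i. M i j) ` {1..k}"
  have "range (\<lambda>j i. M i j) \<subseteq> vs.span ?cols"
    using columns_subset[OF assms] vs.span_superset[of ?cols] vs.span_zero[of ?cols]
    by (meson insert_subset subset_trans)
  then have "mrank M \<le> card ?cols"
    unfolding mrank_def by (intro vs.dim_le_card) auto
  also have "\<dots> \<le> k"
    using card_image_le[of "{1..k}"] by simp
  finally show ?thesis .
qed

lemma le_mrank_if_echelon:
  fixes M :: "nat \<Rightarrow> nat \<Rightarrow> 'a::field"
  assumes "M \<in> mat_space m l"
    and pivot: "\<And>a. a < k \<Longrightarrow> M (r a) (c a) \<noteq> 0"
    and below: "\<And>a b. b < a \<Longrightarrow> a < k \<Longrightarrow> M (r a) (c b) = 0"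
  shows "k \<le> mrank M"
proof -
  define cols where "cols k' = (\<lambda>b i. M i (c b)) ` {..<k'}" for k'
  have "vs.independent (cols k') \<and> card (cols k') = k'" if "k' \<le> k" for k'
    using that
  proof (induction k')
    case 0
    then show ?case by (simp add: cols_def vs.independent_empty)
  next
    case (Suc k')
    have "v (r k') = 0" if "v \<in> cols k'" for v
      using that below Suc.prems by (auto simp: cols_def)
    moreover have "M (r k') (c k') \<noteq> 0"
      using pivot Suc.prems by simp
    ultimately have new: "(\<lambda>i. M i (c k')) \<notin> vs.span (cols k')"
      using span_vanishing_at[of "cols k'" "r k'"] by blast
    have step: "cols (Suc k') = insert (\<lambda>i. M i (c k')) (cols k')"
      by (simp add: cols_def lessThan_Suc)
    have IH: "vs.independent (cols k')" "card (cols k') = k'"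
      using Suc by simp_all
    have "(\<lambda>i. M i (c k')) \<notin> cols k'"
      using new vs.span_superset by blast
    moreover have "finite (cols k')"
      by (simp add: cols_def)
    ultimately show ?case
      using vs.independent_insertI[OF new IH(1)] IH(2) by (simp add: step)
  qed
  then have indep: "vs.independent (cols k)" and card: "card (cols k) = k"
    by auto
  have "finite (range (\<lambda>j i. M i j))"
    using columns_subset[OF assms(1)] finite_subset by blast
  moreover have "cols k \<subseteq> range (\<lambda>j i. M i j)"
    by (auto simp: cols_def)
  ultimately have "card (cols k) \<le> mrank M"
    unfolding mrank_def using indep by (rule vs.independent_card_le_dim_finite)
  then show ?thesis
    using card by simp
qed

lemma nu_eq_sum_list_drop:
  "nu cs d j = sum_list (map (\<lambda>c. c + j + 1 - d) (drop j cs))"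
proof (cases "j \<le> length cs")
  case True
  have "nu cs d j = (\<Sum>i = j..<length cs. cs ! i + j + 1 - d)"
    unfolding nu_def by (rule sum.reindex_bij_witness[of _ Suc "\<lambda>i. i - 1"]) auto
  also have "\<dots> = (\<Sum>i = 0..<length cs - j. cs ! (i + j) + j + 1 - d)"
    using True sum.shift_bounds_nat_ivl[of "\<lambda>i. cs ! i + j + 1 - d" 0 j "length cs - j"] by simp
  also have "\<dots> = sum_list (map (\<lambda>c. c + j + 1 - d) (drop j cs))"
    by (simp add: sum_list_sum_nth add.commute)
  finally show ?thesis .
next
  case False
  then show ?thesis by (simp add: nu_def)
qed

lemma nu_G_heights:
  assumes "n \<ge> 3" and "j < 3"
  shows "nu (G_heights n) 3 j = (n - 2)\<^sup>2"
proof -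
  obtain m where n: "n = m + 3"
    using assms(1) by (metis add.commute le_Suc_ex)
  have "j = 0 \<or> j = 1 \<or> j = 2"
    using assms(2) by linarith
  then show ?thesis
    by (auto simp: nu_eq_sum_list_drop G_heights_def n sum_list_replicate numeral_eq_Suc
        power2_eq_square algebra_simps)
qed

lemma nu_min_G_heights:
  assumes "n \<ge> 3"
  shows "nu_min (G_heights n) 3 = (n - 2)\<^sup>2"
proof -
  have "{0..<3} = {0, 1, 2 :: nat}"
    by auto
  then have "nu (G_heights n) 3 ` {0..<3} = {(n - 2)\<^sup>2}"
    using nu_G_heights[OF assms] by simp
  then show ?thesis
    by (simp add: nu_min_def)
qed

lemma nth_G_heights:
  assumes "n \<ge> 3" and "k < n"
  shows "G_heights n ! k = (if k = 0 then n else if k = n - 1 then 1 else n - 1)"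
  using assms by (auto simp: G_heights_def nth_append nth_Cons' nth_replicate)

lemma mem_ferrers_G_heights:
  assumes "n \<ge> 3"
  shows "(i, j) \<in> ferrers (G_heights n) \<longleftrightarrow>
    1 \<le> j \<and> j \<le> n \<and> 1 \<le> i \<and> i \<le> (if j = 1 then n else if j = n then 1 else n - 1)"
proof -
  have "length (G_heights n) = n"
    using assms by (simp add: G_heights_def)
  then show ?thesis
    using nth_G_heights[OF assms, of "j - 1"] by (auto simp: ferrers_def split: if_splits)
qed

lemma mat_space_subset_ferrers_G_heights:
  assumes "n \<ge> 3"
  shows "mat_space (n - 1) (n - 1) \<subseteq> ferrers_space (ferrers (G_heights n))"
  unfolding mat_space_eq_ferrers_space
  by (rule ferrers_space_mono) (auto simp: mem_ferrers_G_heights[OF assms])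

lemma ferrers_G_heights_subset_mat_space:
  assumes "n \<ge> 3"
  shows "ferrers_space (ferrers (G_heights n)) \<subseteq> mat_space n n"
  unfolding mat_space_eq_ferrers_space
  by (rule ferrers_space_mono) (auto simp: mem_ferrers_G_heights[OF assms] split: if_splits)

lemma build_A_in_ferrers_G_heights:
  assumes "n \<ge> 3"
  shows "build_A n A' \<in> ferrers_space (ferrers (G_heights n))"
  using assms by (auto simp: ferrers_space_def build_A_def mem_ferrers_G_heights split: if_splits)

lemma del_first_mat_space:
  "M \<in> mat_space (Suc m) (Suc k) \<Longrightarrow> del_first M \<in> mat_space m k"
  by (auto simp: mat_space_def del_first_def)

lemma del_first_mscale: "del_first (mscale c M) = mscale c (del_first M)"
  by (simp add: del_first_def mscale_def fun_eq_iff)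

lemma build_A_notin_mat_space:
  "build_A n (A' :: nat \<Rightarrow> nat \<Rightarrow> 'a::field) \<notin> mat_space (n - 1) (n - 1)"
proof
  assume "build_A n A' \<in> mat_space (n - 1) (n - 1)"
  moreover have "build_A n A' 1 n \<noteq> 0"
    by (simp add: build_A_def)
  ultimately have "1 \<le> n \<and> n \<le> n - 1"
    unfolding mat_space_def by blast
  then show False
    by arith
qed

lemma pointwise_extension_eq_span_insert:
  assumes "ms.subspace C0"
  shows "{\<lambda>i j. M i j + c * A i j | M c. M \<in> C0} = ms.span (insert A C0)"
  using ms.span_insert_subspace[OF assms] by (simp add: mscale_def plus_fun_def)

lemma dim_span_insert_build_A:
  fixes C0 :: "(nat \<Rightarrow> nat \<Rightarrow> 'a::{finite,field}) set"
  assumes "C0 \<subseteq> mat_space (n - 1) (n - 1)" and "ms.subspace C0"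
  shows "ms.dim (ms.span (insert (build_A n A') C0)) = Suc (ms.dim C0)"
proof -
  have fin: "finite C0"
    using assms(1) finite_ferrers_space[of "{1..n - 1} \<times> {1..n - 1}"]
    by (auto simp: mat_space_eq_ferrers_space intro: finite_subset)
  have notin: "build_A n A' \<notin> ms.span C0"
    using assms build_A_notin_mat_space ms.span_eq_iff by blast
  show ?thesis
    using ms.dim_insert_notin_span[OF notin ms.span_superset fin] by simp
qed

lemma three_le_mrank_build_A_extension:
  fixes M A' :: "nat \<Rightarrow> nat \<Rightarrow> 'a::field"
  assumes n: "n \<ge> 3" and M: "M \<in> mat_space (n - 1) (n - 1)"
    and A': "A' \<in> mat_space (n - 2) (n - 2)"
    and "c \<noteq> 0" and inner: "del_first M + mscale c A' \<noteq> 0"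
  shows "3 \<le> mrank (M + mscale c (build_A n A'))"
proof -
  define X where "X = M + mscale c (build_A n A')"
  have M_outside: "M i j = 0" if "i = n \<or> j = n" for i j
  proof (rule ccontr)
    assume "M i j \<noteq> 0"
    then have "i \<le> n - 1 \<and> j \<le> n - 1"
      using M by (auto simp: mat_space_def)
    then show False
      using that n by auto
  qed
  have last_col: "X k n = (if k = 1 then c else 0)" for k
    using M_outside n by (auto simp: X_def mscale_def build_A_def)
  have last_row: "X n k = (if k = 1 then c else 0)" for k
    using M_outside n by (auto simp: X_def mscale_def build_A_def)
  have "Suc (n - 2) = n - 1"
    using n by simp
  then have "del_first M \<in> mat_space (n - 2) (n - 2)"
    using M del_first_mat_space[of M "n - 2" "n - 2"] by simp
  then have "del_first M + mscale c A' \<in> mat_space (n - 2) (n - 2)"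
    using A' subspace_mat_space ms.subspace_add ms.subspace_scale by blast
  then obtain i j where ij: "1 \<le> i" "i \<le> n - 2" "1 \<le> j" "j \<le> n - 2"
    and pivot: "(del_first M + mscale c A') i j \<noteq> 0"
    using inner unfolding mat_space_def fun_eq_iff by auto
  have "X (i + 1) (j + 1) = (del_first M + mscale c A') i j"
    using ij n by (auto simp: X_def del_first_def mscale_def build_A_def)
  then have inner_pivot: "X (i + 1) (j + 1) \<noteq> 0"
    using pivot by simp
  have "M \<in> mat_space n n" and "build_A n A' \<in> mat_space n n"
    using M n mat_space_subset_ferrers_G_heights ferrers_G_heights_subset_mat_space
      build_A_in_ferrers_G_heights by blast+
  then have "X \<in> mat_space n n"
    unfolding X_def using subspace_mat_space ms.subspace_add ms.subspace_scale by blast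
  moreover have "3 \<le> mrank X"
  proof (rule le_mrank_if_echelon[where r = "(!) [1, i + 1, n]" and c = "(!) [n, j + 1, 1]"])
    show "X \<in> mat_space n n" by fact
    show "X ([1, i + 1, n] ! a) ([n, j + 1, 1] ! a) \<noteq> 0" if "a < 3" for a
      using that inner_pivot last_col last_row \<open>c \<noteq> 0\<close>
      by (auto simp: less_Suc_eq numeral_3_eq_3)
    show "X ([1, i + 1, n] ! a) ([n, j + 1, 1] ! b) = 0" if "b < a" "a < 3" for a b
      using that ij n last_col last_row by (auto simp: less_Suc_eq numeral_3_eq_3)
  qed
  ultimately show ?thesis
    by (simp add: X_def)
qed

lemma three_le_mrank_extension:
  fixes C0 :: "(nat \<Rightarrow> nat \<Rightarrow> 'a::field) set"
  assumes n: "n \<ge> 3" and C0: "C0 \<subseteq> mat_space (n - 1) (n - 1)" "ms.subspace C0"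
    and C0_rank: "\<And>M. M \<in> C0 \<Longrightarrow> M \<noteq> 0 \<Longrightarrow> 3 \<le> mrank M"
    and A': "A' \<in> mat_space (n - 2) (n - 2)" "A' \<notin> del_first ` C0"
    and X: "X \<in> ms.span (insert (build_A n A') C0)" "X \<noteq> 0"
  shows "3 \<le> mrank X"
proof -
  obtain M c where M: "M \<in> C0" and X_eq: "X = M + mscale c (build_A n A')"
    using X(1) ms.span_insert_subspace[OF C0(2)] by blast
  show ?thesis
  proof (cases "c = 0")
    case True
    then show ?thesis
      using C0_rank M X by (simp add: X_eq ms.scale_zero_left)
  next
    case False
    have "del_first M + mscale c A' \<noteq> 0"
    proof
      assume "del_first M + mscale c A' = 0"
      then have "del_first M i j + c * A' i j = 0" for i j
        by (metis mscale_def plus_fun_apply zero_fun_def)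
      then have "A' = mscale (- 1 / c) (del_first M)"
        using False by (auto simp: mscale_def fun_eq_iff field_simps add_eq_0_iff)
      then have "A' = del_first (mscale (- 1 / c) M)"
        by (simp only: del_first_mscale)
      moreover have "mscale (- 1 / c) M \<in> C0"
        using C0(2) M by (rule ms.subspace_scale)
      ultimately show False
        using A'(2) by blast
    qed
    then show ?thesis
      using three_le_mrank_build_A_extension[OF n _ A'(1) False] C0(1) M X_eq by blast
  qed
qed

lemma min_rank_is_extension:
  fixes C0 :: "(nat \<Rightarrow> nat \<Rightarrow> 'a::field) set"
  assumes n: "n \<ge> 3" and C0: "C0 \<subseteq> mat_space (n - 1) (n - 1)" "ms.subspace C0"
    and C0_dim: "ms.dim C0 = (n - 1) * (n - 3)" and C0_rank: "min_rank_is C0 3"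
    and A': "A' \<in> mat_space (n - 2) (n - 2)" "A' \<notin> del_first ` C0"
  shows "min_rank_is (ms.span (insert (build_A n A') C0)) 3"
proof -
  let ?A = "build_A n A'"
  have C0_rank_ge: "3 \<le> mrank M" if "M \<in> C0" "M \<noteq> 0" for M
    using C0_rank that by (simp add: min_rank_is_def)
  have rank_ge: "3 \<le> mrank X" if "X \<in> ms.span (insert ?A C0)" "X \<noteq> 0" for X
    by (rule three_le_mrank_extension[OF n C0 C0_rank_ge A' that])
  have "\<exists>X \<in> ms.span (insert ?A C0). X \<noteq> 0 \<and> mrank X = 3"
  proof (cases "C0 = {0}")
    case False
    then obtain M where "M \<in> C0" "M \<noteq> 0" "mrank M = 3"
      using C0_rank by (auto simp: min_rank_is_def)
    moreover have "C0 \<subseteq> ms.span (insert ?A C0)"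
      by (meson ms.span_superset subset_insertI subset_trans)
    ultimately show ?thesis
      by blast
  next
    case True
    have "ms.dim C0 = ms.dim ({} :: (nat \<Rightarrow> nat \<Rightarrow> 'a) set)"
      by (rule ms.span_eq_dim) (simp add: True)
    also have "\<dots> = 0"
      using ms.dim_eq_card_independent[OF ms.independent_empty] by simp
    finally have "n = 3"
      using n C0_dim by simp
    have A_in: "?A \<in> ms.span (insert ?A C0)"
      by (simp add: ms.span_base)
    have "?A 1 n \<noteq> 0"
      by (simp add: build_A_def)
    then have A_ne: "?A \<noteq> 0"
      by auto
    have "?A \<in> mat_space n n"
      using n build_A_in_ferrers_G_heights ferrers_G_heights_subset_mat_space by blast
    then have "mrank ?A \<le> 3"
      using \<open>n = 3\<close> mrank_le_ncols by blast
    then show ?thesis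
      using rank_ge[OF A_in A_ne] A_in A_ne by (intro bexI[of _ ?A]) auto
  qed
  then show ?thesis
    unfolding min_rank_is_def using rank_ge by blast
qed

theorem theorem6p3:
  fixes n :: nat
    and C0 :: "(nat \<Rightarrow> nat \<Rightarrow> 'a::{finite,field}) set"
    and A' :: "nat \<Rightarrow> nat \<Rightarrow> 'a"
  assumes "n \<ge> 3"
    and "MRD_code (n - 1) (n - 1) C0 ((n - 1) * (n - 3)) 3"
    and "A' \<in> mat_space (n - 2) (n - 2)"
    and "A' \<notin> del_first ` C0"
  shows "nu_min (G_heights n) 3 = (n - 2)^2
    \<and> MFD_code (G_heights n) {\<lambda>i j. M i j + c * build_A n A' i j | M c. M \<in> C0}
        (nu_min (G_heights n) 3) 3"
proof -
  let ?C = "ms.span (insert (build_A n A') C0)"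
  have C0: "C0 \<subseteq> mat_space (n - 1) (n - 1)" "ms.subspace C0"
    and C0_dim: "ms.dim C0 = (n - 1) * (n - 3)" and C0_rank: "min_rank_is C0 3"
    using assms(2) by (auto simp: MRD_code_def rank_code_def mat_subspace_def mat_dim_def)
  have "ms.dim ?C = Suc ((n - 1) * (n - 3))"
    using dim_span_insert_build_A[OF C0] C0_dim by simp
  also have "\<dots> = (n - 2)\<^sup>2"
    using assms(1) by (auto simp: power2_eq_square algebra_simps dest!: le_Suc_ex)
  finally have dim: "ms.dim ?C = (n - 2)\<^sup>2" .
  have "?C \<subseteq> ferrers_space (ferrers (G_heights n))"
    using C0(1) assms(1) mat_space_subset_ferrers_G_heights build_A_in_ferrers_G_heights
    by (intro ms.span_minimal subspace_ferrers_space) auto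
  moreover have "min_rank_is ?C 3"
    using min_rank_is_extension[OF assms(1) C0 C0_dim C0_rank assms(3,4)] .
  ultimately show ?thesis
    unfolding MFD_code_def ferrers_code_def mat_subspace_def mat_dim_def
      pointwise_extension_eq_span_insert[OF C0(2)]
    using dim nu_min_G_heights[OF assms(1)] by simp
qed

end
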